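(* Let $1<p<\infty$, $[c,d]\subset(0,\infty)$ and $h\in L^1([c,d])$. Then for every $\varepsilon>0$ there exists $g\in\mathbb W_{p',1/v_1}$ such that $|g|=|h|$ on $[c,d]$ and $\|g\|_{\mathscr W_{p',1/v_1}}<\varepsilon$.
   Context: $p'=p/(p-1)$. For $1\le r<\infty$, $\mathscr V_r(0,\infty)$ is the set of $v\in L^r_{\rm loc}(0,\infty)$, $v\ge0$, $\|v\|_{L^1(0,\infty)}\ne0$. Let $v_0,v_1\in\mathscr V_p(0,\infty)$ with $1/v_1\in L^{p'}_{\rm loc}(0,\infty)$, and assume there is $c_0\in(0,\infty)$ with $\|v_1^{-1}\|_{L^{p'}(0,c_0)}\|v_0\|_{L^p(0,c_0)}=\|v_1^{-1}\|_{L^{p'}(c_0,\infty)}\|v_0\|_{L^p(c_0,\infty)}=\infty$. Then there exist unique strictly increasing absolutely continuous functions $a,b$ on $(0,\infty)$ with $a(t),b(t)\to0$ as $t\to0$, $a(t),b(t)\to\infty$ as $t\to\infty$, $a(t)<t<b(t)$, $\int_{a(t)}^t v_1^{-p'}=\int_t^{b(t)}v_1^{-p'}$ and $\bigl(\int_{a(t)}^{b(t)}v_1^{-p'}\bigr)^{1/p'}\bigl(\int_{a(t)}^{b(t)}v_0^{p}\bigr)^{1/p}=1$ for all $t>0$; $a^{-1}$ is the inverse of $a$ and $V_1(t):=\int_{a(t)}^{b(t)}v_1^{-p'}$. For $g\in L^1_{\rm loc}(0,\infty)$: $\mathbb G(g)=\Bigl(\int_0^\infty v_1^{-p'}(t)\Bigl|\int_t^{a^{-1}(t)}\frac{g(x)}{V_1(x)}\bigl(\int_{a(x)}^t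 v_1^{-p'}\bigr)dx\Bigr|^{p'}dt\Bigr)^{1/p'}$, $\mathcal G(g)=\Bigl(\int_0^\infty v_1^{-p'}(t)V_1^{p'}(t)\Bigl|\int_t^{a^{-1}(t)}\frac{g(x)}{V_1(x)}dx\Bigr|^{p'}dt\Bigr)^{1/p'}$, $\mathsf G(g)=\Bigl(\int_0^\infty\bigl(\int_t^{a^{-1}(t)}|g(x)|dx\bigr)^{p'}v_1^{-p'}(t)dt\Bigr)^{1/p'}$; $\|g\|_{\mathscr W_{p',1/v_1}}:=\mathbb G(g)+\mathcal G(g)$ and $\mathbb W_{p',1/v_1}=\{g\in L^1_{\rm loc}(0,\infty):\mathsf G(g)<\infty\}$. *)

theory Defs
  imports "HOL-Analysis.Analysis"
begin

definition conj_exp :: "real \<Rightarrow> real" where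
  "conj_exp p = p / (p - 1)"

definition ennpow :: "ennreal \<Rightarrow> real \<Rightarrow> ennreal" where
  "ennpow x r = (if x = \<infinity> then \<infinity> else ennreal (enn2real x powr r))"

definition Lloc :: "real \<Rightarrow> (real \<Rightarrow> real) \<Rightarrow> bool" where
  "Lloc r f \<longleftrightarrow> (\<lambda>x. indicator {0<..} x * f x) \<in> borel_measurable lborel \<and>
     (\<forall>c d. 0 < c \<longrightarrow> c \<le> d \<longrightarrow>
        (\<integral>\<^sup>+x\<in>{c..d}. ennreal (\<bar>f x\<bar> powr r) \<partial>lborel) < \<infinity>)"

definition Vclass :: "real \<Rightarrow> (real \<Rightarrow> real) \<Rightarrow> bool" where
  "Vclass r v \<longleftrightarrow> Lloc r v \<and> (\<forall>x>0. v x \<ge> 0) \<and>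
     (\<integral>\<^sup>+x\<in>{0<..}. ennreal (v x) \<partial>lborel) \<noteq> 0"

definition inv_Lloc :: "real \<Rightarrow> (real \<Rightarrow> real) \<Rightarrow> bool" where
  "inv_Lloc r v \<longleftrightarrow> (AE x in lborel. x > 0 \<longrightarrow> v x \<noteq> 0) \<and> Lloc r (\<lambda>x. 1 / v x)"

definition Lnorm :: "real \<Rightarrow> (real \<Rightarrow> real) \<Rightarrow> real set \<Rightarrow> ennreal" where
  "Lnorm r f A = ennpow (\<integral>\<^sup>+x\<in>A. ennreal (\<bar>f x\<bar> powr r) \<partial>lborel) (1 / r)"

definition abs_cont_on :: "real set \<Rightarrow> (real \<Rightarrow> real) \<Rightarrow> bool" where
  "abs_cont_on S f \<longleftrightarrow> (\<forall>\<epsilon>>0. \<exists>\<delta>>0. \<forall>(n::nat) (x::nat\<Rightarrow>real) y.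
      (\<forall>i<n. x i \<le> y i \<and> x i \<in> S \<and> y i \<in> S) \<longrightarrow>
      (\<forall>i. Suc i < n \<longrightarrow> y i \<le> x (Suc i)) \<longrightarrow>
      (\<Sum>i<n. y i - x i) < \<delta> \<longrightarrow> (\<Sum>i<n. \<bar>f (y i) - f (x i)\<bar>) < \<epsilon>)"

definition loc_abs_cont :: "(real \<Rightarrow> real) \<Rightarrow> bool" where
  "loc_abs_cont f \<longleftrightarrow> (\<forall>c d. 0 < c \<longrightarrow> c \<le> d \<longrightarrow> abs_cont_on {c..d} f)"

definition wgt :: "real \<Rightarrow> (real \<Rightarrow> real) \<Rightarrow> real \<Rightarrow> real" where
  "wgt p v1 x = \<bar>1 / v1 x\<bar> powr conj_exp p"

definition V1fun :: "real \<Rightarrow> (real \<Rightarrow> real) \<Rightarrow> (real \<Rightarrow> real) \<Rightarrow> (real \<Rightarrow> real) \<Rightarrow> real \<Rightarrow> real" where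
  "V1fun p v1 a b t = (LINT x:{a t..b t}|lborel. wgt p v1 x)"

definition GG :: "real \<Rightarrow> (real \<Rightarrow> real) \<Rightarrow> (real \<Rightarrow> real) \<Rightarrow> (real \<Rightarrow> real) \<Rightarrow> (real \<Rightarrow> real) \<Rightarrow> ennreal" where
  "GG p v1 a b g = ennpow (\<integral>\<^sup>+t\<in>{0<..}. ennreal (wgt p v1 t *
       \<bar>LINT x:{t..inv_into {0<..} a t}|lborel.
          g x / V1fun p v1 a b x * (LINT s:{a x..t}|lborel. wgt p v1 s)\<bar> powr conj_exp p) \<partial>lborel)
     (1 / conj_exp p)"

definition Gc :: "real \<Rightarrow> (real \<Rightarrow> real) \<Rightarrow> (real \<Rightarrow> real) \<Rightarrow> (real \<Rightarrow> real) \<Rightarrow> (real \<Rightarrow> real) \<Rightarrow> ennreal" where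
  "Gc p v1 a b g = ennpow (\<integral>\<^sup>+t\<in>{0<..}. ennreal (wgt p v1 t * V1fun p v1 a b t powr conj_exp p *
       \<bar>LINT x:{t..inv_into {0<..} a t}|lborel. g x / V1fun p v1 a b x\<bar> powr conj_exp p) \<partial>lborel)
     (1 / conj_exp p)"

definition Gs :: "real \<Rightarrow> (real \<Rightarrow> real) \<Rightarrow> (real \<Rightarrow> real) \<Rightarrow> (real \<Rightarrow> real) \<Rightarrow> ennreal" where
  "Gs p v1 a g = ennpow (\<integral>\<^sup>+t\<in>{0<..}. ennreal
       ((LINT x:{t..inv_into {0<..} a t}|lborel. \<bar>g x\<bar>) powr conj_exp p * wgt p v1 t) \<partial>lborel)
     (1 / conj_exp p)"

definition Wnorm :: "real \<Rightarrow> (real \<Rightarrow> real) \<Rightarrow> (real \<Rightarrow> real) \<Rightarrow> (real \<Rightarrow> real) \<Rightarrow> (real \<Rightarrow> real) \<Rightarrow> ennreal" where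
  "Wnorm p v1 a b g = GG p v1 a b g + Gc p v1 a b g"

definition Wspace :: "real \<Rightarrow> (real \<Rightarrow> real) \<Rightarrow> (real \<Rightarrow> real) \<Rightarrow> (real \<Rightarrow> real) set" where
  "Wspace p v1 a = {g. Lloc 1 g \<and> Gs p v1 a g < \<infinity>}"

end

theory Submission
  imports Defs "HOL-Probability.Probability_Mass_Function"
begin

(* Take g = s h on [c,d] and g = 0 elsewhere, for a measurable sign s = +-1, so that |g| = |h| on
   [c,d]. Since a is an increasing bijection of (0,oo), for every t the inner integrals of GG and Gc
   only see the subinterval [max t c, min (a^-1 t) d] of [c,d], and they vanish unless
   a c <= t <= d. With W a primitive of v1^(-p'), the kernel of GG there equals W t - W (a x), so
   both inner integrals are combinations, with coefficients bounded in t, of the integrals of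
   s h / V1 and s h W(a) / V1 over subintervals of [c,d]. Hence both norms are O(eta) as soon as s
   makes all these integrals at most eta in absolute value.
   Such a sign exists for every integrable f with values in an inner product space: cut [c,d] into
   pieces of small norm-mass and choose the sign e_i of each piece integral u_i against the running
   sum; then |sum e_i u_i|^2 <= sum |u_i|^2 <= (max |u_i|) * (integral of |f|), which is small. *)

section \<open>Integrals over intervals\<close>

lemma set_integral_Icc_split:
  fixes f :: "real \<Rightarrow> 'a::{banach, second_countable_topology}"
  assumes "x \<le> y" "y \<le> z" and f: "set_integrable lborel {x..z} f"
  shows "(LINT t:{x..z}|lborel. f t) = (LINT t:{x..y}|lborel. f t) + (LINT t:{y..z}|lborel. f t)"
proof -
  have "{x..z} = {x..y} \<union> {y<..z}" "{x..y} \<inter> {y<..z} = {}"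
    using assms(1,2) by auto
  moreover have "set_integrable lborel {x..y} f" "set_integrable lborel {y<..z} f"
    using assms(1,2) by (auto intro: set_integrable_subset[OF f])
  moreover have "(LINT t:{y<..z}|lborel. f t) = (LINT t:{y..z}|lborel. f t)"
    by (rule set_integral_discrete_difference[where X="{y}"]) auto
  ultimately show ?thesis
    by (simp add: set_integral_Un)
qed

lemma set_integral_Icc_telescope:
  fixes f :: "real \<Rightarrow> 'a::{banach, second_countable_topology}"
  assumes "incseq lo" and "set_integrable lborel {lo 0..lo k} f"
  shows "(LINT x:{lo 0..lo k}|lborel. f x) = (\<Sum>i<k. LINT x:{lo i..lo (Suc i)}|lborel. f x)"
  using assms(2)
proof (induction k)
  case 0
  have "(LINT x:{lo 0}|lborel. f x) = (LINT x:{}|lborel. f x)"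
    by (rule set_integral_discrete_difference[where X="{lo 0}"]) auto
  then show ?case
    by (simp add: set_lebesgue_integral_def)
next
  case (Suc k)
  have "lo 0 \<le> lo k" "lo k \<le> lo (Suc k)"
    using \<open>incseq lo\<close> by (auto simp: incseq_def)
  moreover from this have "set_integrable lborel {lo 0..lo k} f"
    by (intro set_integrable_subset[OF Suc.prems]) auto
  ultimately show ?case
    using Suc set_integral_Icc_split[of "lo 0" "lo k" "lo (Suc k)" f] by simp
qed

lemma set_integral_nonneg:
  fixes f :: "'b \<Rightarrow> real"
  assumes "\<And>x. x \<in> A \<Longrightarrow> 0 \<le> f x"
  shows "0 \<le> (LINT x:A|M. f x)"
  unfolding set_lebesgue_integral_def
  by (rule Bochner_Integration.integral_nonneg) (simp add: assms split: split_indicator)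

lemma set_integrable_bounded_scaleR:
  fixes f :: "'b \<Rightarrow> 'a::{banach, second_countable_topology}"
  assumes f: "set_integrable M A f" and s: "s \<in> borel_measurable M" and B: "\<And>x. \<bar>s x\<bar> \<le> B"
  shows "set_integrable M A (\<lambda>x. s x *\<^sub>R f x)"
  unfolding set_integrable_def
proof (rule Bochner_Integration.integrable_bound)
  show "integrable M (\<lambda>x. B *\<^sub>R (indicator A x *\<^sub>R f x))"
    using f unfolding set_integrable_def by (rule integrable_scaleR_right)
  have "(\<lambda>x. s x *\<^sub>R (indicator A x *\<^sub>R f x)) \<in> borel_measurable M"
    using f unfolding set_integrable_def by (intro borel_measurable_scaleR s borel_measurable_integrable)
  then show "(\<lambda>x. indicator A x *\<^sub>R s x *\<^sub>R f x) \<in> borel_measurable M"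
    by (simp only: scaleR_left_commute)
  have "0 \<le> B"
    using B[of undefined] by simp
  then show "AE x in M. norm (indicator A x *\<^sub>R s x *\<^sub>R f x) \<le> norm (B *\<^sub>R (indicator A x *\<^sub>R f x))"
    by (intro AE_I2) (auto simp: B mult_right_mono split: split_indicator)
qed

lemma set_integrable_scaleR_continuous:
  fixes \<phi> :: "real \<Rightarrow> 'a::{banach, second_countable_topology}"
  assumes h: "set_integrable lborel {c..d} h" and \<phi>: "continuous_on {c..d} \<phi>"
  shows "set_integrable lborel {c..d} (\<lambda>x. h x *\<^sub>R \<phi> x)"
proof -
  obtain B where B: "\<And>x. x \<in> {c..d} \<Longrightarrow> norm (\<phi> x) \<le> B"
    using compact_imp_bounded[OF compact_continuous_image[OF \<phi> compact_Icc]]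
    unfolding bounded_iff by blast
  have "(\<lambda>x. indicator {c..d} x *\<^sub>R h x) \<in> borel_measurable borel"
    using borel_measurable_integrable[OF h[unfolded set_integrable_def]] by simp
  moreover have "(\<lambda>x. indicator {c..d} x *\<^sub>R \<phi> x) \<in> borel_measurable borel"
    by (rule borel_measurable_continuous_on_indicator[OF _ \<phi>]) simp
  ultimately have "(\<lambda>x. (indicator {c..d} x *\<^sub>R h x) *\<^sub>R (indicator {c..d} x *\<^sub>R \<phi> x)) \<in> borel_measurable borel"
    by (rule borel_measurable_scaleR)
  moreover have "(\<lambda>x. (indicator {c..d} x *\<^sub>R h x) *\<^sub>R (indicator {c..d} x *\<^sub>R \<phi> x))
      = (\<lambda>x. indicator {c..d} x *\<^sub>R (h x *\<^sub>R \<phi> x))"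
    by (auto simp: indicator_def)
  ultimately have "(\<lambda>x. indicator {c..d} x *\<^sub>R (h x *\<^sub>R \<phi> x)) \<in> borel_measurable lborel"
    by simp
  moreover have "integrable lborel (\<lambda>x. B *\<^sub>R (indicator {c..d} x *\<^sub>R h x))"
    using h unfolding set_integrable_def by (rule integrable_scaleR_right)
  moreover have "norm (indicator {c..d} x *\<^sub>R (h x *\<^sub>R \<phi> x)) \<le> norm (B *\<^sub>R (indicator {c..d} x *\<^sub>R h x))" for x
  proof (cases "x \<in> {c..d}")
    case True
    then have "norm (\<phi> x) \<le> \<bar>B\<bar>"
      using B[of x] by linarith
    then have "\<bar>h x\<bar> * norm (\<phi> x) \<le> \<bar>h x\<bar> * \<bar>B\<bar>"
      by (rule mult_left_mono) simp
    then show ?thesis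
      using True by (simp add: abs_mult mult.commute)
  qed simp
  ultimately show ?thesis
    unfolding set_integrable_def by (blast intro: Bochner_Integration.integrable_bound AE_I2)
qed

lemma set_integral_indicator_mult:
  fixes f :: "'b \<Rightarrow> real"
  shows "(LINT x:A|M. indicator B x * f x) = (LINT x:A \<inter> B|M. f x)"
  unfolding set_lebesgue_integral_def by (simp add: indicator_inter_arith mult.assoc)

lemma set_integral_Re:
  fixes f :: "'b \<Rightarrow> complex"
  assumes "set_integrable M A f"
  shows "(LINT x:A|M. Re (f x)) = Re (LINT x:A|M. f x)"
  using integral_Re[of M "\<lambda>x. indicator A x *\<^sub>R f x"] assms
  unfolding set_integrable_def set_lebesgue_integral_def by simp

lemma exists_short_intervals_small_integral:
  fixes H :: "real \<Rightarrow> real"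
  assumes H: "set_integrable lborel {c..d} H" and "0 < \<delta>"
  obtains L where "0 < L"
    and "\<And>x y. c \<le> x \<Longrightarrow> x \<le> y \<Longrightarrow> y \<le> d \<Longrightarrow> y - x \<le> L \<Longrightarrow> \<bar>LINT t:{x..y}|lborel. H t\<bar> \<le> \<delta>"
proof -
  define G where "G y = (LINT t:{c..y}|lborel. H t)" for y
  have "continuous_on {c..d} (\<lambda>y. integral {c..y} H)"
    using H by (intro indefinite_integral_continuous_1 set_borel_integral_eq_integral)
  moreover have "integral {c..y} H = G y" if "y \<in> {c..d}" for y
    unfolding G_def using that
    by (intro set_borel_integral_eq_integral(2)[symmetric] set_integrable_subset[OF H]) auto
  ultimately have "continuous_on {c..d} G"
    by (rule continuous_on_eq)
  then have "uniformly_continuous_on {c..d} G"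
    by (intro compact_uniformly_continuous compact_Icc)
  then obtain L0 where "0 < L0"
    and L0: "\<And>x y. x \<in> {c..d} \<Longrightarrow> y \<in> {c..d} \<Longrightarrow> dist y x < L0 \<Longrightarrow> dist (G y) (G x) < \<delta>"
    using \<open>0 < \<delta>\<close> by (rule uniformly_continuous_onE) blast
  show thesis
  proof (rule that[of "L0 / 2"])
    fix x y assume xy: "c \<le> x" "x \<le> y" "y \<le> d" "y - x \<le> L0 / 2"
    have "G y = G x + (LINT t:{x..y}|lborel. H t)"
      unfolding G_def using xy by (intro set_integral_Icc_split set_integrable_subset[OF H]) auto
    moreover have "dist (G y) (G x) < \<delta>"
      using xy \<open>0 < L0\<close> by (intro L0) (auto simp: dist_real_def)
    ultimately show "\<bar>LINT t:{x..y}|lborel. H t\<bar> \<le> \<delta>"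
      by (simp add: dist_real_def)
  qed (use \<open>0 < L0\<close> in simp)
qed

section \<open>Signs with small partial integrals\<close>

lemma exists_signs_partial_sums_norm_le:
  fixes u :: "nat \<Rightarrow> 'a::real_inner"
  obtains e :: "nat \<Rightarrow> real"
  where "\<And>i. \<bar>e i\<bar> = 1" and "\<And>k. (norm (\<Sum>i<k. e i *\<^sub>R u i))\<^sup>2 \<le> (\<Sum>i<k. (norm (u i))\<^sup>2)"
proof -
  \<comment> \<open>Choose each sign so that the new term is not positively correlated with the partial sum.\<close>
  define sg where "sg S v = (if S \<bullet> v \<le> 0 then 1 else -1 :: real)" for S v :: 'a
  define S where "S = rec_nat 0 (\<lambda>k T. T + sg T (u k) *\<^sub>R u k)"
  define e where "e k = sg (S k) (u k)" for k
  have S_eq: "S k = (\<Sum>i<k. e i *\<^sub>R u i)" for k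
    by (induction k) (simp_all add: S_def e_def)
  have "(norm (S k))\<^sup>2 \<le> (\<Sum>i<k. (norm (u i))\<^sup>2)" for k
  proof (induction k)
    case (Suc k)
    have "S (Suc k) = S k + e k *\<^sub>R u k"
      by (simp add: S_def e_def)
    then have "(norm (S (Suc k)))\<^sup>2 = (norm (S k))\<^sup>2 + 2 * (e k * (S k \<bullet> u k)) + (e k)\<^sup>2 * (norm (u k))\<^sup>2"
      unfolding power2_norm_eq_inner by (simp add: inner_add_left inner_add_right inner_commute algebra_simps power2_eq_square)
    also have "\<dots> \<le> (norm (S k))\<^sup>2 + (norm (u k))\<^sup>2"
      by (simp add: e_def sg_def power2_eq_square)
    finally show ?case
      using Suc by simp
  qed (simp add: S_def)
  moreover have "\<bar>e i\<bar> = 1" for i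
    by (simp add: e_def sg_def)
  ultimately show thesis
    using that S_eq by metis
qed

lemma exists_signs_partial_sums_small:
  fixes u :: "nat \<Rightarrow> 'a::real_inner"
  assumes "\<And>i. norm (u i) \<le> m i" "\<And>i. m i \<le> \<delta>" "\<And>k. (\<Sum>i<k. m i) \<le> M" "0 \<le> \<delta>"
  obtains e :: "nat \<Rightarrow> real"
  where "\<And>i. \<bar>e i\<bar> = 1" and "\<And>k. (norm (\<Sum>i<k. e i *\<^sub>R u i))\<^sup>2 \<le> \<delta> * M"
proof -
  obtain e :: "nat \<Rightarrow> real" where e: "\<And>i. \<bar>e i\<bar> = 1"
    and greedy: "\<And>k. (norm (\<Sum>i<k. e i *\<^sub>R u i))\<^sup>2 \<le> (\<Sum>i<k. (norm (u i))\<^sup>2)"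
    by (rule exists_signs_partial_sums_norm_le[where u=u]) auto
  have bound: "(\<Sum>i<k. (norm (u i))\<^sup>2) \<le> \<delta> * M" for k
  proof -
    have "(\<Sum>i<k. (norm (u i))\<^sup>2) \<le> (\<Sum>i<k. \<delta> * m i)"
    proof (rule sum_mono)
      fix i
      have "(norm (u i))\<^sup>2 \<le> m i * m i"
        using assms(1)[of i] by (simp add: power2_eq_square mult_mono')
      also have "\<dots> \<le> \<delta> * m i"
        using assms(1,2)[of i] norm_ge_zero[of "u i"] by (intro mult_right_mono) linarith+
      finally show "(norm (u i))\<^sup>2 \<le> \<delta> * m i" .
    qed
    also have "\<dots> \<le> \<delta> * M"
      using assms(3,4) by (simp add: sum_distrib_left[symmetric] mult_left_mono)
    finally show ?thesis .
  qed
  show thesis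
  proof (rule that)
    show "\<bar>e i\<bar> = 1" for i
      by (rule e)
    show "(norm (\<Sum>i<k. e i *\<^sub>R u i))\<^sup>2 \<le> \<delta> * M" for k
      using greedy bound by (rule order_trans)
  qed
qed

definition Icc_grid :: "real \<Rightarrow> real \<Rightarrow> real \<Rightarrow> nat \<Rightarrow> real" where
  "Icc_grid c d L i = min d (c + real i * L)"

lemma Icc_grid:
  assumes "c \<le> d" "0 < L"
  shows "incseq (Icc_grid c d L)" and "Icc_grid c d L 0 = c"
    and "c \<le> Icc_grid c d L i" and "Icc_grid c d L i \<le> d"
    and "Icc_grid c d L (Suc i) - Icc_grid c d L i \<le> L"
proof -
  have "c + real m * L \<le> c + real n * L" if "m \<le> n" for m n
    using \<open>0 < L\<close> that by (simp add: mult_right_mono)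
  then show "incseq (Icc_grid c d L)" "Icc_grid c d L 0 = c" "c \<le> Icc_grid c d L i" "Icc_grid c d L i \<le> d"
    using assms by (auto simp: Icc_grid_def incseq_def min.coboundedI2)
  show "Icc_grid c d L (Suc i) - Icc_grid c d L i \<le> L"
    using \<open>0 < L\<close> by (auto simp: Icc_grid_def min_def algebra_simps)
qed

definition step_sign :: "(nat \<Rightarrow> real) \<Rightarrow> real \<Rightarrow> real \<Rightarrow> real \<Rightarrow> real" where
  "step_sign e c L x = e (nat \<lfloor>(x - c) / L\<rfloor>)"

lemma step_sign_measurable: "step_sign e c L \<in> borel_measurable borel"
proof -
  have "(\<lambda>x::real. \<lfloor>(x - c) / L\<rfloor>) \<in> borel \<rightarrow>\<^sub>M count_space UNIV"
    using measurable_compose[OF _ measurable_real_floor] by simp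
  then have "(\<lambda>x. nat \<lfloor>(x - c) / L\<rfloor>) \<in> borel \<rightarrow>\<^sub>M count_space UNIV"
    by (rule measurable_compose) simp
  then show ?thesis
    unfolding step_sign_def by (rule measurable_compose_countable[rotated]) simp
qed

lemma step_sign_eq:
  assumes "0 < L" "c + real i * L < x" "x < c + real (Suc i) * L"
  shows "step_sign e c L x = e i"
proof -
  have "real i < (x - c) / L" "(x - c) / L < real i + 1"
    using assms by (simp_all add: field_simps)
  then have "\<lfloor>(x - c) / L\<rfloor> = int i"
    by (intro floor_unique) simp_all
  then show ?thesis
    by (simp add: step_sign_def)
qed

lemma set_integral_step_sign_Icc_grid_piece:
  fixes f :: "real \<Rightarrow> 'a::{banach, second_countable_topology}" and c d L :: real
  assumes "0 < L"
  defines "lo \<equiv> Icc_grid c d L"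
  shows "(LINT x:{lo i..lo (Suc i)}|lborel. step_sign e c L x *\<^sub>R f x) = e i *\<^sub>R (LINT x:{lo i..lo (Suc i)}|lborel. f x)"
proof -
  have "(LINT x:{lo i..lo (Suc i)}|lborel. step_sign e c L x *\<^sub>R f x)
      = (LINT x:{lo i<..<lo (Suc i)}|lborel. step_sign e c L x *\<^sub>R f x)"
    by (rule set_integral_discrete_difference[where X="{lo i, lo (Suc i)}"]) auto
  also have "\<dots> = (LINT x:{lo i<..<lo (Suc i)}|lborel. e i *\<^sub>R f x)"
  proof (intro set_lebesgue_integral_cong allI impI)
    fix x assume "x \<in> {lo i<..<lo (Suc i)}"
    then have "c + real i * L < x" "x < c + real (Suc i) * L"
      by (auto simp: lo_def Icc_grid_def)
    then show "step_sign e c L x *\<^sub>R f x = e i *\<^sub>R f x"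
      using \<open>0 < L\<close> by (simp add: step_sign_eq)
  qed simp
  also have "(LINT x:{lo i<..<lo (Suc i)}|lborel. f x) = (LINT x:{lo i..lo (Suc i)}|lborel. f x)"
    by (rule set_integral_discrete_difference[where X="{lo i, lo (Suc i)}"]) auto
  then have "(LINT x:{lo i<..<lo (Suc i)}|lborel. e i *\<^sub>R f x) = e i *\<^sub>R (LINT x:{lo i..lo (Suc i)}|lborel. f x)"
    by simp
  finally show ?thesis .
qed

lemma set_integral_step_sign_Icc_grid:
  fixes f :: "real \<Rightarrow> 'a::{banach, second_countable_topology}"
  assumes f: "set_integrable lborel {c..d} f" and e: "\<And>i. \<bar>e i\<bar> \<le> B"
    and "0 < L" "c \<le> y" "y \<le> d"
  defines "lo \<equiv> Icc_grid c d L" and "k \<equiv> nat \<lfloor>(y - c) / L\<rfloor>"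
  shows "lo k \<le> y" and "y - lo k \<le> L"
    and "(LINT x:{c..y}|lborel. step_sign e c L x *\<^sub>R f x) =
      (\<Sum>i<k. e i *\<^sub>R (LINT x:{lo i..lo (Suc i)}|lborel. f x)) +
      (LINT x:{lo k..y}|lborel. step_sign e c L x *\<^sub>R f x)"
proof -
  note lo = Icc_grid[OF order_trans[OF \<open>c \<le> y\<close> \<open>y \<le> d\<close>] \<open>0 < L\<close>, folded lo_def]
  have "real k \<le> (y - c) / L" "(y - c) / L < real k + 1"
    using assms(3,4) unfolding k_def by (simp_all add: divide_nonneg_pos)
  then have "c + real k * L \<le> y" "y < c + real k * L + L"
    using \<open>0 < L\<close> by (simp_all add: field_simps)
  then show lo_k: "lo k \<le> y" and "y - lo k \<le> L"
    using \<open>y \<le> d\<close> by (auto simp: lo_def Icc_grid_def min_def)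
  have sf: "set_integrable lborel {c..d} (\<lambda>x. step_sign e c L x *\<^sub>R f x)"
    using f by (rule set_integrable_bounded_scaleR[where B=B]) (auto simp: step_sign_def e)
  have "(LINT x:{c..y}|lborel. step_sign e c L x *\<^sub>R f x)
      = (LINT x:{c..lo k}|lborel. step_sign e c L x *\<^sub>R f x) + (LINT x:{lo k..y}|lborel. step_sign e c L x *\<^sub>R f x)"
    using lo lo_k assms(5) by (intro set_integral_Icc_split set_integrable_subset[OF sf]) auto
  also have "(LINT x:{c..lo k}|lborel. step_sign e c L x *\<^sub>R f x)
      = (\<Sum>i<k. e i *\<^sub>R (LINT x:{lo i..lo (Suc i)}|lborel. f x))"
  proof -
    have "set_integrable lborel {lo 0..lo k} (\<lambda>x. step_sign e c L x *\<^sub>R f x)"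
      using lo lo_k assms(5) by (intro set_integrable_subset[OF sf]) auto
    from set_integral_Icc_telescope[OF lo(1) this] show ?thesis
      using set_integral_step_sign_Icc_grid_piece[OF \<open>0 < L\<close>, where c=c and d=d and e=e and f=f, folded lo_def]
      by (simp add: lo(2))
  qed
  finally show "(LINT x:{c..y}|lborel. step_sign e c L x *\<^sub>R f x) =
      (\<Sum>i<k. e i *\<^sub>R (LINT x:{lo i..lo (Suc i)}|lborel. f x)) +
      (LINT x:{lo k..y}|lborel. step_sign e c L x *\<^sub>R f x)" .
qed

lemma norm_set_integral_step_sign_le:
  fixes f :: "real \<Rightarrow> 'a::{banach, second_countable_topology}"
  assumes f: "set_integrable lborel {c..d} f" and e: "\<And>i. \<bar>e i\<bar> = 1"
    and "0 < L" and y: "c \<le> y" "y \<le> d"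
    and short: "\<And>x y. c \<le> x \<Longrightarrow> x \<le> y \<Longrightarrow> y \<le> d \<Longrightarrow> y - x \<le> L \<Longrightarrow>
      (LINT t:{x..y}|lborel. norm (f t)) \<le> \<delta>"
    and sums: "\<And>k. norm (\<Sum>i<k. e i *\<^sub>R (LINT x:{Icc_grid c d L i..Icc_grid c d L (Suc i)}|lborel. f x)) \<le> \<sigma>"
  shows "norm (LINT x:{c..y}|lborel. step_sign e c L x *\<^sub>R f x) \<le> \<sigma> + \<delta>"
proof -
  define lo where "lo = Icc_grid c d L"
  define k where "k = nat \<lfloor>(y - c) / L\<rfloor>"
  have "\<bar>e i\<bar> \<le> 1" for i
    by (simp add: e)
  note decomp = set_integral_step_sign_Icc_grid[OF f this \<open>0 < L\<close> y, folded lo_def k_def]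
  have "set_integrable lborel {lo k..y} (\<lambda>x. step_sign e c L x *\<^sub>R f x)"
    using Icc_grid(3)[of c d L] decomp(1) y \<open>0 < L\<close> unfolding lo_def
    by (intro set_integrable_subset[OF set_integrable_bounded_scaleR[OF f, where B=1]])
      (auto simp: step_sign_def e)
  then have "norm (LINT x:{lo k..y}|lborel. step_sign e c L x *\<^sub>R f x) \<le> (LINT x:{lo k..y}|lborel. norm (f x))"
    using set_integral_norm_bound by (fastforce simp: step_sign_def e)
  also have "\<dots> \<le> \<delta>"
    using short decomp(1,2) Icc_grid(3)[of c d L] y \<open>0 < L\<close> unfolding lo_def by auto
  finally show ?thesis
    using norm_triangle_ineq[of "\<Sum>i<k. e i *\<^sub>R (LINT x:{lo i..lo (Suc i)}|lborel. f x)"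
        "LINT x:{lo k..y}|lborel. step_sign e c L x *\<^sub>R f x"] sums[of k]
    unfolding decomp(3) lo_def by linarith
qed

lemma exists_signs_Icc_grid_sums_small:
  fixes f :: "real \<Rightarrow> 'a::{real_inner, banach, second_countable_topology}"
  assumes f: "set_integrable lborel {c..d} f" and "c \<le> d" "0 < L" "0 \<le> \<delta>"
    and short: "\<And>i. (LINT x:{Icc_grid c d L i..Icc_grid c d L (Suc i)}|lborel. norm (f x)) \<le> \<delta>"
  obtains e :: "nat \<Rightarrow> real" where "\<And>i. \<bar>e i\<bar> = 1"
    and "\<And>k. (norm (\<Sum>i<k. e i *\<^sub>R (LINT x:{Icc_grid c d L i..Icc_grid c d L (Suc i)}|lborel. f x)))\<^sup>2
      \<le> \<delta> * (LINT x:{c..d}|lborel. norm (f x))"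
proof -
  define lo where "lo = Icc_grid c d L"
  note lo = Icc_grid[OF \<open>c \<le> d\<close> \<open>0 < L\<close>, folded lo_def]
  have H: "set_integrable lborel {lo i..lo j} (\<lambda>x. norm (f x))" for i j
    using lo by (intro set_integrable_subset[OF set_integrable_norm[OF f]]) auto
  have "norm (LINT x:{lo i..lo (Suc i)}|lborel. f x) \<le> (LINT x:{lo i..lo (Suc i)}|lborel. norm (f x))" for i
    using lo by (intro set_integral_norm_bound set_integrable_subset[OF f]) auto
  moreover have "(LINT x:{lo i..lo (Suc i)}|lborel. norm (f x)) \<le> \<delta>" for i
    using short unfolding lo_def .
  moreover have "(\<Sum>i<k. LINT x:{lo i..lo (Suc i)}|lborel. norm (f x)) \<le> (LINT x:{c..d}|lborel. norm (f x))" for k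
  proof -
    have "(\<Sum>i<k. LINT x:{lo i..lo (Suc i)}|lborel. norm (f x)) = (LINT x:{lo 0..lo k}|lborel. norm (f x))"
      using lo(1) H by (simp add: set_integral_Icc_telescope)
    also have "\<dots> \<le> (LINT x:{lo 0..lo k}|lborel. norm (f x)) + (LINT x:{lo k..d}|lborel. norm (f x))"
      by (simp add: set_integral_nonneg)
    also have "\<dots> = (LINT x:{c..d}|lborel. norm (f x))"
      using lo by (simp add: set_integral_Icc_split[symmetric] set_integrable_norm[OF f])
    finally show ?thesis .
  qed
  ultimately show thesis
    using \<open>0 \<le> \<delta>\<close> by (rule exists_signs_partial_sums_small) (rule that[unfolded lo_def[symmetric]])
qed

lemma exists_sign_small_partial_integrals:
  fixes f :: "real \<Rightarrow> 'a::{real_inner, banach, second_countable_topology}"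
  assumes f: "set_integrable lborel {c..d} f" and "c \<le> d" and "0 < \<eta>"
  obtains s where "s \<in> borel_measurable borel" and "\<And>x. \<bar>s x\<bar> = 1"
    and "\<And>y. c \<le> y \<Longrightarrow> y \<le> d \<Longrightarrow> norm (LINT x:{c..y}|lborel. s x *\<^sub>R f x) \<le> \<eta>"
proof -
  define M where "M = (LINT x:{c..d}|lborel. norm (f x))"
  define \<delta> where "\<delta> = min (\<eta> / 2) (\<eta>\<^sup>2 / (4 * (M + 1)))"
  have "0 \<le> M"
    unfolding M_def by (rule set_integral_nonneg) simp
  then have "0 < \<delta>"
    using \<open>0 < \<eta>\<close> by (simp add: \<delta>_def)
  have "\<delta> * M \<le> \<eta>\<^sup>2 / (4 * (M + 1)) * M"
    using \<open>0 \<le> M\<close> by (intro mult_right_mono) (simp_all add: \<delta>_def)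
  also have "\<dots> \<le> (\<eta> / 2)\<^sup>2"
    using \<open>0 \<le> M\<close> by (simp add: field_simps power2_eq_square mult_left_mono)
  finally have \<delta>M: "\<delta> * M \<le> (\<eta> / 2)\<^sup>2" .
  obtain L where "0 < L" and short: "\<And>x y. c \<le> x \<Longrightarrow> x \<le> y \<Longrightarrow> y \<le> d \<Longrightarrow> y - x \<le> L \<Longrightarrow>
      \<bar>LINT t:{x..y}|lborel. norm (f t)\<bar> \<le> \<delta>"
    using exists_short_intervals_small_integral[OF set_integrable_norm[OF f] \<open>0 < \<delta>\<close>] by blast
  then have short': "(LINT t:{x..y}|lborel. norm (f t)) \<le> \<delta>"
    if "c \<le> x" "x \<le> y" "y \<le> d" "y - x \<le> L" for x y
    using that by (meson abs_le_D1)
  note grid = Icc_grid[OF \<open>c \<le> d\<close> \<open>0 < L\<close>]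
  obtain e where e: "\<And>i. \<bar>e i\<bar> = 1"
    and sums: "\<And>k. (norm (\<Sum>i<k. e i *\<^sub>R (LINT x:{Icc_grid c d L i..Icc_grid c d L (Suc i)}|lborel. f x)))\<^sup>2 \<le> \<delta> * M"
    using exists_signs_Icc_grid_sums_small[OF f \<open>c \<le> d\<close> \<open>0 < L\<close> less_imp_le[OF \<open>0 < \<delta>\<close>]]
      short'[OF grid(3) incseq_SucD[OF grid(1)] grid(4) grid(5)] unfolding M_def by blast
  have "norm (\<Sum>i<k. e i *\<^sub>R (LINT x:{Icc_grid c d L i..Icc_grid c d L (Suc i)}|lborel. f x)) \<le> \<eta> / 2" for k
    using order_trans[OF sums \<delta>M] \<open>0 < \<eta>\<close> by (simp add: power2_le_iff_abs_le)
  then have "norm (LINT x:{c..y}|lborel. step_sign e c L x *\<^sub>R f x) \<le> \<eta> / 2 + \<delta>" if "c \<le> y" "y \<le> d" for y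
    using that by (intro norm_set_integral_step_sign_le[OF f e \<open>0 < L\<close> _ _ short'])
  moreover have "\<delta> \<le> \<eta> / 2"
    unfolding \<delta>_def by (rule min.cobounded1)
  ultimately show thesis
    using e by (intro that[of "step_sign e c L"] step_sign_measurable) (fastforce simp: step_sign_def)+
qed

lemma exists_sign_small_integrals:
  fixes f :: "real \<Rightarrow> 'a::{real_inner, banach, second_countable_topology}"
  assumes f: "set_integrable lborel {c..d} f" and "c \<le> d" and "0 < \<eta>"
  obtains s where "s \<in> borel_measurable borel" and "\<And>x. \<bar>s x\<bar> = 1"
    and "\<And>l r. c \<le> l \<Longrightarrow> r \<le> d \<Longrightarrow> norm (LINT x:{l..r}|lborel. s x *\<^sub>R f x) \<le> \<eta>"
proof -
  obtain s where s: "s \<in> borel_measurable borel" "\<And>x. \<bar>s x\<bar> = 1"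
    and partial: "\<And>y. c \<le> y \<Longrightarrow> y \<le> d \<Longrightarrow> norm (LINT x:{c..y}|lborel. s x *\<^sub>R f x) \<le> \<eta> / 2"
    using exists_sign_small_partial_integrals[OF f \<open>c \<le> d\<close>, of "\<eta> / 2"] \<open>0 < \<eta>\<close> by auto
  have "s \<in> borel_measurable lborel"
    using s(1) by simp
  have "norm (LINT x:{l..r}|lborel. s x *\<^sub>R f x) \<le> \<eta>" if "c \<le> l" "r \<le> d" for l r
  proof (cases "l \<le> r")
    case True
    have "set_integrable lborel {c..r} (\<lambda>x. s x *\<^sub>R f x)"
      using that by (intro set_integrable_subset[OF set_integrable_bounded_scaleR[OF f \<open>s \<in> borel_measurable lborel\<close>]]) (auto simp: s(2))
    then have "(LINT x:{c..r}|lborel. s x *\<^sub>R f x) = (LINT x:{c..l}|lborel. s x *\<^sub>R f x) + (LINT x:{l..r}|lborel. s x *\<^sub>R f x)"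
      using that True by (intro set_integral_Icc_split) auto
    then show ?thesis
      using partial[of r] partial[of l] that True norm_triangle_ineq4[of "LINT x:{c..r}|lborel. s x *\<^sub>R f x" "LINT x:{c..l}|lborel. s x *\<^sub>R f x"]
      by (simp add: algebra_simps)
  qed (use \<open>0 < \<eta>\<close> in \<open>simp add: set_lebesgue_integral_def\<close>)
  with s show thesis
    using that by blast
qed

lemma abs_cont_on_imp_continuous_on:
  assumes "abs_cont_on S f"
  shows "continuous_on S f"
  unfolding continuous_on_iff
proof (intro ballI allI impI)
  fix x e :: real assume x: "x \<in> S" and "0 < e"
  then obtain \<delta> where "\<delta> > 0" and \<delta>: "\<forall>(n::nat) (xs::nat\<Rightarrow>real) ys.
      (\<forall>i<n. xs i \<le> ys i \<and> xs i \<in> S \<and> ys i \<in> S) \<longrightarrow>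
      (\<forall>i. Suc i < n \<longrightarrow> ys i \<le> xs (Suc i)) \<longrightarrow>
      (\<Sum>i<n. ys i - xs i) < \<delta> \<longrightarrow> (\<Sum>i<n. \<bar>f (ys i) - f (xs i)\<bar>) < e"
    using assms unfolding abs_cont_on_def by blast
  show "\<exists>d>0. \<forall>x'\<in>S. dist x' x < d \<longrightarrow> dist (f x') (f x) < e"
  proof (intro exI[of _ \<delta>] conjI ballI impI \<open>\<delta> > 0\<close>)
    fix x' assume "x' \<in> S" and "dist x' x < \<delta>"
    then have "\<bar>f (max x x') - f (min x x')\<bar> < e"
      using x \<delta>[rule_format, of "Suc 0" "\<lambda>_. min x x'" "\<lambda>_. max x x'"]
      by (auto simp: dist_real_def min_def max_def)
    then show "dist (f x') (f x) < e"
      by (auto simp: dist_real_def min_def max_def abs_minus_commute split: if_splits)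
  qed
qed

lemma loc_abs_cont_continuous_on:
  assumes "loc_abs_cont f" and "0 < \<alpha>"
  shows "continuous_on {\<alpha>..\<beta>} f"
proof (cases "\<alpha> \<le> \<beta>")
  case True
  then show ?thesis
    using assms by (intro abs_cont_on_imp_continuous_on) (simp add: loc_abs_cont_def)
qed simp

lemma continuous_on_Icc_abs_le:
  fixes f :: "real \<Rightarrow> real"
  assumes "continuous_on {\<alpha>..\<beta>} f"
  obtains B where "0 \<le> B" and "\<And>x. x \<in> {\<alpha>..\<beta>} \<Longrightarrow> \<bar>f x\<bar> \<le> B"
proof -
  obtain B where "\<And>x. x \<in> {\<alpha>..\<beta>} \<Longrightarrow> \<bar>f x\<bar> \<le> B"
    using compact_imp_bounded[OF compact_continuous_image[OF assms compact_Icc]]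
    unfolding bounded_real by blast
  then show thesis
    using that[of "max 0 B"] by fastforce
qed

lemma strict_mono_on_tendsto_zero_pos:
  fixes a :: "real \<Rightarrow> real"
  assumes a: "strict_mono_on {0<..} a" and a0: "(a \<longlongrightarrow> 0) (at_right 0)" and "0 < t"
  shows "0 < a t"
proof -
  have "a s \<le> a (t / 2)" if "0 < s" "s < t / 2" for s
    using that by (rule_tac strict_mono_on_leD[OF a]) auto
  then have "eventually (\<lambda>s. a s \<le> a (t / 2)) (at_right 0)"
    unfolding eventually_at_right_field using \<open>0 < t\<close> by (intro exI[of _ "t / 2"]) auto
  then have "0 \<le> a (t / 2)"
    by (rule tendsto_upperbound[OF a0]) simp
  also have "a (t / 2) < a t"
    using \<open>0 < t\<close> by (rule_tac strict_mono_onD[OF a]) auto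
  finally show ?thesis .
qed

lemma continuous_on_pos_surj:
  fixes a :: "real \<Rightarrow> real"
  assumes cont: "\<And>\<alpha> \<beta>. 0 < \<alpha> \<Longrightarrow> continuous_on {\<alpha>..\<beta>} a"
    and a0: "(a \<longlongrightarrow> 0) (at_right 0)" and a_inf: "filterlim a at_top at_top" and "0 < t"
  shows "t \<in> a ` {0<..}"
proof -
  obtain b where "0 < b" and b: "\<And>y. 0 < y \<Longrightarrow> y < b \<Longrightarrow> a y < t"
    using order_tendstoD(2)[OF a0 \<open>0 < t\<close>] unfolding eventually_at_right_field by blast
  define y where "y = b / 2"
  have "0 < y" "a y < t"
    using \<open>0 < b\<close> b by (simp_all add: y_def)
  obtain N where N: "\<And>z. N \<le> z \<Longrightarrow> t < a z"
    using a_inf unfolding filterlim_at_top_dense eventually_at_top_linorder by blast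
  define z where "z = max N y"
  have "y \<le> z" "t < a z"
    using N by (simp_all add: z_def)
  then obtain x where "y \<le> x" "a x = t"
    using IVT'[of a y t z] cont[OF \<open>0 < y\<close>, of z] \<open>a y < t\<close> by auto
  then show ?thesis
    using \<open>0 < y\<close> by force
qed

lemma inv_Lloc_set_integrable:
  assumes v: "inv_Lloc r v" and "0 < \<alpha>"
  shows "set_integrable lborel {\<alpha>..\<beta>} (\<lambda>x. \<bar>1 / v x\<bar> powr r)"
proof (cases "\<alpha> \<le> \<beta>")
  case True
  from v have meas: "(\<lambda>x. indicator {0<..} x * (1 / v x)) \<in> borel_measurable borel"
    and fin: "(\<integral>\<^sup>+x\<in>{\<alpha>..\<beta>}. ennreal (\<bar>1 / v x\<bar> powr r) \<partial>lborel) < \<infinity>"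
    unfolding inv_Lloc_def Lloc_def using \<open>0 < \<alpha>\<close> True by auto
  have "(\<lambda>x. indicator {\<alpha>..\<beta>} x *\<^sub>R (\<bar>1 / v x\<bar> powr r))
      = (\<lambda>x. indicator {\<alpha>..\<beta>} x * (\<bar>indicator {0<..} x * (1 / v x)\<bar> powr r))"
    using \<open>0 < \<alpha>\<close> by (auto simp: fun_eq_iff indicator_def)
  also have "\<dots> \<in> borel_measurable lborel"
    unfolding measurable_lborel2 using meas by measurable
  finally have "(\<lambda>x. indicator {\<alpha>..\<beta>} x *\<^sub>R (\<bar>1 / v x\<bar> powr r)) \<in> borel_measurable lborel" .
  moreover have "(\<integral>\<^sup>+x. ennreal (norm (indicator {\<alpha>..\<beta>} x *\<^sub>R (\<bar>1 / v x\<bar> powr r))) \<partial>lborel)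
      = (\<integral>\<^sup>+x\<in>{\<alpha>..\<beta>}. ennreal (\<bar>1 / v x\<bar> powr r) \<partial>lborel)"
    by (intro nn_integral_cong) (auto simp: indicator_def)
  ultimately show ?thesis
    unfolding set_integrable_def integrable_iff_bounded using fin by simp
qed (simp add: set_integrable_def)

lemma ennpow_le_ennreal:
  assumes "x \<le> ennreal X" "0 \<le> X" "0 \<le> r"
  shows "ennpow x r \<le> ennreal (X powr r)"
proof -
  have "x \<noteq> \<infinity>"
    using assms(1) by (auto simp: top_unique)
  moreover have "enn2real x \<le> X"
    using assms(1,2) enn2real_mono[OF assms(1)] by simp
  ultimately show ?thesis
    using assms(3) by (simp add: ennpow_def ennreal_leI powr_mono2)
qed

lemma ennpow_nn_integral_le:
  fixes F w :: "real \<Rightarrow> real"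
  assumes "0 < q" "0 \<le> Y" and w: "set_integrable lborel {\<alpha>..\<beta>} w" "\<And>t. 0 \<le> w t"
    and F: "\<And>t. 0 < t \<Longrightarrow> F t \<le> indicator {\<alpha>..\<beta>} t * w t * Y powr q"
  shows "ennpow (\<integral>\<^sup>+t\<in>{0<..}. ennreal (F t) \<partial>lborel) (1 / q)
    \<le> ennreal (Y * (LINT t:{\<alpha>..\<beta>}|lborel. w t) powr (1 / q))"
proof -
  define I where "I = (LINT t:{\<alpha>..\<beta>}|lborel. w t)"
  have "0 \<le> I"
    unfolding I_def by (rule set_integral_nonneg) (rule w(2))
  have "(\<integral>\<^sup>+t\<in>{0<..}. ennreal (F t) \<partial>lborel) \<le> (\<integral>\<^sup>+t. ennreal (Y powr q * (indicator {\<alpha>..\<beta>} t *\<^sub>R w t)) \<partial>lborel)"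
  proof (rule nn_integral_mono)
    fix t
    show "ennreal (F t) * indicator {0<..} t \<le> ennreal (Y powr q * (indicator {\<alpha>..\<beta>} t *\<^sub>R w t))"
      using F[of t] by (cases "0 < t") (auto simp: indicator_def mult.commute ennreal_neg intro: ennreal_leI)
  qed
  also have "\<dots> = ennreal (Y powr q * I)"
    using w unfolding I_def set_integrable_def set_lebesgue_integral_def
    by (subst nn_integral_eq_integral) auto
  finally have "ennpow (\<integral>\<^sup>+t\<in>{0<..}. ennreal (F t) \<partial>lborel) (1 / q) \<le> ennreal ((Y powr q * I) powr (1 / q))"
    using \<open>0 < q\<close> \<open>0 \<le> I\<close> by (intro ennpow_le_ennreal) auto
  also have "(Y powr q * I) powr (1 / q) = Y * I powr (1 / q)"
    using \<open>0 < q\<close> \<open>0 \<le> Y\<close> \<open>0 \<le> I\<close> by (simp add: powr_mult powr_powr)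
  finally show ?thesis
    unfolding I_def .
qed

lemma V1fun_pos:
  assumes "V1fun p v1 a b t powr (1 / conj_exp p) * Y = 1"
  shows "0 < V1fun p v1 a b t"
proof -
  have "0 \<le> V1fun p v1 a b t"
    unfolding V1fun_def by (rule set_integral_nonneg) (simp add: wgt_def)
  moreover have "V1fun p v1 a b t \<noteq> 0"
    using assms by auto
  ultimately show ?thesis
    by simp
qed

section \<open>Sign changes with small weighted norm\<close>

locale ab_weights =
  fixes p :: real and v1 a b :: "real \<Rightarrow> real"
  assumes p_gt_1: "1 < p"
    and v1_inv: "inv_Lloc (conj_exp p) v1"
    and a_mono: "strict_mono_on {0<..} a"
    and a_ac: "loc_abs_cont a" and b_ac: "loc_abs_cont b"
    and a_0: "(a \<longlongrightarrow> 0) (at_right 0)" and a_inf: "filterlim a at_top at_top"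
    and a_le_b: "\<And>t. 0 < t \<Longrightarrow> a t \<le> b t"
    and V_pos: "\<And>t. 0 < t \<Longrightarrow> 0 < V1fun p v1 a b t"
begin

abbreviation q where "q \<equiv> conj_exp p"
abbreviation w where "w \<equiv> wgt p v1"
abbreviation V where "V \<equiv> V1fun p v1 a b"
abbreviation ainv where "ainv \<equiv> inv_into {0<..} a"

lemma q_pos: "0 < q"
  using p_gt_1 by (simp add: conj_exp_def)

lemma w_nonneg: "0 \<le> w x"
  by (simp add: wgt_def)

lemma w_integrable: "0 < \<alpha> \<Longrightarrow> set_integrable lborel {\<alpha>..\<beta>} w"
  unfolding wgt_def[abs_def] using v1_inv by (rule inv_Lloc_set_integrable)

lemma a_pos: "0 < t \<Longrightarrow> 0 < a t"
  by (rule strict_mono_on_tendsto_zero_pos[OF a_mono a_0])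

lemma a_continuous_on: "0 < \<alpha> \<Longrightarrow> continuous_on {\<alpha>..\<beta>} a"
  by (rule loc_abs_cont_continuous_on[OF a_ac])

lemma b_continuous_on: "0 < \<alpha> \<Longrightarrow> continuous_on {\<alpha>..\<beta>} b"
  by (rule loc_abs_cont_continuous_on[OF b_ac])

lemma a_le: "0 < x \<Longrightarrow> x \<le> y \<Longrightarrow> a x \<le> a y"
  by (rule strict_mono_on_leD[OF a_mono]) auto

lemma a_ainv: "0 < t \<Longrightarrow> a (ainv t) = t"
  using continuous_on_pos_surj[OF a_continuous_on a_0 a_inf] by (rule f_inv_into_f)

lemma a_le_of_le_ainv: "0 < x \<Longrightarrow> 0 < t \<Longrightarrow> x \<le> ainv t \<Longrightarrow> a x \<le> t"
  using a_le[of x "ainv t"] a_ainv[of t] by simp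

lemma ainv_less: "0 < c \<Longrightarrow> 0 < t \<Longrightarrow> t < a c \<Longrightarrow> ainv t < c"
  using a_le[of c "ainv t"] a_ainv[of t] by force

lemma V_eq_diff:
  assumes "0 < \<alpha>" "\<alpha> \<le> x"
  shows "V x = (LINT s:{a \<alpha>..b x}|lborel. w s) - (LINT s:{a \<alpha>..a x}|lborel. w s)"
proof -
  have "a \<alpha> \<le> a x" "a x \<le> b x"
    using assms by (simp_all add: a_le a_le_b)
  then have "(LINT s:{a \<alpha>..b x}|lborel. w s) = (LINT s:{a \<alpha>..a x}|lborel. w s) + V x"
    unfolding V1fun_def using a_pos[OF \<open>0 < \<alpha>\<close>]
    by (intro set_integral_Icc_split w_integrable) auto
  then show ?thesis
    by simp
qed

lemma V_continuous_on:
  assumes "0 < \<alpha>"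
  shows "continuous_on {\<alpha>..\<beta>} V"
proof -
  define P where "P y = (LINT s:{a \<alpha>..y}|lborel. w s)" for y
  have "continuous_on UNIV P"
    unfolding P_def using a_pos[OF assms] by (intro continuous_on_LBINT w_integrable)
  then have "continuous_on {\<alpha>..\<beta>} (\<lambda>x. P (b x) - P (a x))"
    by (intro continuous_on_diff continuous_on_compose2[OF _ b_continuous_on[OF assms]]
        continuous_on_compose2[OF _ a_continuous_on[OF assms]]) auto
  then show ?thesis
    by (rule continuous_on_eq) (simp add: P_def V_eq_diff[OF assms])
qed

text \<open>Real and imaginary part are h / V and h W(a) / V, with W the primitive of w from a c: one sign
  change has to make the integrals of both small.\<close>

definition kernel_pair :: "real \<Rightarrow> (real \<Rightarrow> real) \<Rightarrow> real \<Rightarrow> complex" where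
  "kernel_pair c h x = (h x / V x) *\<^sub>R Complex 1 (LINT y:{a c..a x}|lborel. w y)"

lemma Icc_ainv_Int_eq_empty:
  assumes "0 < c" "0 < t" "t \<notin> {a c..d}"
  shows "{t..ainv t} \<inter> {c..d} = {}"
proof (cases "d < t")
  case False
  then have "ainv t < c"
    using assms by (intro ainv_less) auto
  then show ?thesis
    by auto
qed auto

lemma set_integral_ainv_outside:
  fixes F :: "real \<Rightarrow> real"
  assumes "0 < c" "0 < t" "t \<notin> {a c..d}" and F: "\<And>x. x \<notin> {c..d} \<Longrightarrow> F x = 0"
  shows "(LINT x:{t..ainv t}|lborel. F x) = 0"
proof -
  have "(LINT x:{t..ainv t}|lborel. F x) = (LINT x:{t..ainv t}|lborel. 0)"
    using Icc_ainv_Int_eq_empty[OF assms(1-3)] F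
    by (intro set_lebesgue_integral_cong allI impI) auto
  then show ?thesis
    by simp
qed

lemma ennpow_weighted_le:
  assumes "0 < c" "0 \<le> Y"
    and bound: "\<And>t. t \<in> {a c..d} \<Longrightarrow> \<bar>G t\<bar> \<le> Y"
    and outside: "\<And>t. 0 < t \<Longrightarrow> t \<notin> {a c..d} \<Longrightarrow> G t = 0"
  shows "ennpow (\<integral>\<^sup>+t\<in>{0<..}. ennreal (w t * \<bar>G t\<bar> powr q) \<partial>lborel) (1 / q)
    \<le> ennreal (Y * (LINT t:{a c..d}|lborel. w t) powr (1 / q))"
proof (rule ennpow_nn_integral_le[OF q_pos \<open>0 \<le> Y\<close> w_integrable[OF a_pos[OF \<open>0 < c\<close>]] w_nonneg])
  fix t :: real assume "0 < t"
  show "w t * \<bar>G t\<bar> powr q \<le> indicator {a c..d} t * w t * Y powr q"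
  proof (cases "t \<in> {a c..d}")
    case True
    then have "\<bar>G t\<bar> powr q \<le> Y powr q"
      using bound q_pos by (intro powr_mono2) auto
    then show ?thesis
      using True by (simp add: mult_left_mono w_nonneg)
  qed (simp add: outside \<open>0 < t\<close>)
qed

lemma Gc_eq_weighted:
  "Gc p v1 a b g = ennpow (\<integral>\<^sup>+t\<in>{0<..}.
    ennreal (w t * \<bar>V t * (LINT x:{t..ainv t}|lborel. g x / V x)\<bar> powr q) \<partial>lborel) (1 / q)"
proof -
  have "V t powr q * \<bar>LINT x:{t..ainv t}|lborel. g x / V x\<bar> powr q
      = \<bar>V t * (LINT x:{t..ainv t}|lborel. g x / V x)\<bar> powr q" if "0 < t" for t
    using V_pos[OF that] by (simp add: abs_mult powr_mult)
  then have "(\<integral>\<^sup>+t\<in>{0<..}. ennreal (w t * V t powr q * \<bar>LINT x:{t..ainv t}|lborel. g x / V x\<bar> powr q) \<partial>lborel)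
      = (\<integral>\<^sup>+t\<in>{0<..}. ennreal (w t * \<bar>V t * (LINT x:{t..ainv t}|lborel. g x / V x)\<bar> powr q) \<partial>lborel)"
    by (intro nn_integral_cong) (simp add: mult.assoc split: split_indicator)
  then show ?thesis
    unfolding Gc_def by simp
qed

lemma Gs_eq_weighted:
  "Gs p v1 a g = ennpow (\<integral>\<^sup>+t\<in>{0<..}.
    ennreal (w t * \<bar>LINT x:{t..ainv t}|lborel. \<bar>g x\<bar>\<bar> powr q) \<partial>lborel) (1 / q)"
proof -
  have "\<bar>LINT x:{t..ainv t}|lborel. \<bar>g x\<bar>\<bar> = (LINT x:{t..ainv t}|lborel. \<bar>g x\<bar>)" for t
    by (intro abs_of_nonneg set_integral_nonneg) simp
  then show ?thesis
    unfolding Gs_def by (simp add: mult.commute)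
qed

context
  fixes c d :: real and h :: "real \<Rightarrow> real"
  assumes c_pos: "0 < c" and c_le_d: "c \<le> d" and h: "set_integrable lborel {c..d} h"
begin

lemma kernel_pair_integrable: "set_integrable lborel {c..d} (kernel_pair c h)"
proof -
  define P where "P y = (LINT s:{a c..y}|lborel. w s)" for y
  have "continuous_on UNIV P"
    unfolding P_def using a_pos[OF c_pos] by (intro continuous_on_LBINT w_integrable)
  moreover have "V x \<noteq> 0" if "x \<in> {c..d}" for x
    using V_pos[of x] c_pos that by auto
  ultimately have "continuous_on {c..d} (\<lambda>x. Complex (1 / V x) (P (a x) / V x))"
    using c_pos
    by (intro continuous_on_Complex continuous_on_divide continuous_on_const V_continuous_on
        continuous_on_compose2[OF _ a_continuous_on]) auto
  then have "set_integrable lborel {c..d} (\<lambda>x. h x *\<^sub>R Complex (1 / V x) (P (a x) / V x))"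
    by (rule set_integrable_scaleR_continuous[OF h])
  then show ?thesis
    unfolding kernel_pair_def P_def by (simp add: scaleR_complex.ctr)
qed

lemma Lloc_sign_change:
  assumes s_meas: "s \<in> borel_measurable borel" and s_sign: "\<And>x. \<bar>s x\<bar> = 1"
  shows "Lloc 1 (\<lambda>x. indicator {c..d} x * (s x * h x))"
  unfolding Lloc_def
proof (intro conjI allI impI)
  have "(\<lambda>x. indicator {c..d} x * h x) \<in> borel_measurable borel"
    using borel_measurable_integrable[OF h[unfolded set_integrable_def]] by simp
  moreover have "(\<lambda>x. indicator {0<..} x * (indicator {c..d} x * (s x * h x)))
      = (\<lambda>x. indicator {0<..} x * (s x * (indicator {c..d} x * h x)))"
    by (simp add: fun_eq_iff mult_ac)
  ultimately show "(\<lambda>x. indicator {0<..} x * (indicator {c..d} x * (s x * h x))) \<in> borel_measurable lborel"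
    using s_meas by simp
  fix l r :: real
  have "(\<integral>\<^sup>+x\<in>{l..r}. ennreal (\<bar>indicator {c..d} x * (s x * h x)\<bar> powr 1) \<partial>lborel)
      \<le> (\<integral>\<^sup>+x. ennreal (indicator {c..d} x * \<bar>h x\<bar>) \<partial>lborel)"
    by (intro nn_integral_mono) (auto simp: abs_mult s_sign indicator_def intro: ennreal_leI)
  also have "\<dots> < \<infinity>"
    using h unfolding set_integrable_def integrable_iff_bounded by (simp add: abs_mult)
  finally show "(\<integral>\<^sup>+x\<in>{l..r}. ennreal (\<bar>indicator {c..d} x * (s x * h x)\<bar> powr 1) \<partial>lborel) < \<infinity>" .
qed

lemma Gs_sign_change_le:
  assumes s_sign: "\<And>x. \<bar>s x\<bar> = 1"
  shows "Gs p v1 a (\<lambda>x. indicator {c..d} x * (s x * h x))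
    \<le> ennreal ((LINT x:{c..d}|lborel. \<bar>h x\<bar>) * (LINT t:{a c..d}|lborel. w t) powr (1 / q))"
  unfolding Gs_eq_weighted
proof (rule ennpow_weighted_le[OF c_pos])
  show "0 \<le> (LINT x:{c..d}|lborel. \<bar>h x\<bar>)"
    by (rule set_integral_nonneg) simp
  fix t
  have "indicator {t..ainv t} x *\<^sub>R \<bar>indicator {c..d} x * (s x * h x)\<bar> \<le> indicator {c..d} x *\<^sub>R \<bar>h x\<bar>" for x
    by (simp add: abs_mult s_sign split: split_indicator)
  then have "(LINT x:{t..ainv t}|lborel. \<bar>indicator {c..d} x * (s x * h x)\<bar>) \<le> (LINT x:{c..d}|lborel. \<bar>h x\<bar>)"
    using set_integrable_abs[OF h] unfolding set_lebesgue_integral_def set_integrable_def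
    by (intro integral_mono') auto
  then show "\<bar>LINT x:{t..ainv t}|lborel. \<bar>indicator {c..d} x * (s x * h x)\<bar>\<bar> \<le> (LINT x:{c..d}|lborel. \<bar>h x\<bar>)"
    by (simp add: set_integral_nonneg)
next
  fix t assume "0 < t" "t \<notin> {a c..d}"
  with c_pos show "(LINT x:{t..ainv t}|lborel. \<bar>indicator {c..d} x * (s x * h x)\<bar>) = 0"
    by (rule set_integral_ainv_outside) simp
qed

lemma sign_change_in_Wspace:
  assumes "s \<in> borel_measurable borel" and "\<And>x. \<bar>s x\<bar> = 1"
  shows "(\<lambda>x. indicator {c..d} x * (s x * h x)) \<in> Wspace p v1 a"
  using Lloc_sign_change[OF assms] le_less_trans[OF Gs_sign_change_le[OF assms(2)] ennreal_less_top]
  unfolding Wspace_def by simp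

context
  fixes s :: "real \<Rightarrow> real" and \<eta> :: real
  assumes s_meas: "s \<in> borel_measurable borel" and s_sign: "\<And>x. \<bar>s x\<bar> = 1"
    and s_cancels: "\<And>l r. c \<le> l \<Longrightarrow> r \<le> d \<Longrightarrow> norm (LINT x:{l..r}|lborel. s x *\<^sub>R kernel_pair c h x) \<le> \<eta>"
begin

lemma cancel_bound_nonneg: "0 \<le> \<eta>"
  using order_trans[OF norm_ge_zero s_cancels[OF order_refl c_le_d]] .

lemma signed_kernel_integrable: "set_integrable lborel {l..r} (\<lambda>x. s x *\<^sub>R kernel_pair c h x)"
  if "c \<le> l" "r \<le> d" for l r
proof -
  have "s \<in> borel_measurable lborel"
    using s_meas by simp
  with kernel_pair_integrable have "set_integrable lborel {c..d} (\<lambda>x. s x *\<^sub>R kernel_pair c h x)"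
    by (rule set_integrable_bounded_scaleR[where B=1]) (simp add: s_sign)
  then show ?thesis
    by (rule set_integrable_subset) (use that in auto)
qed

lemma signed_kernel_Re_le:
  assumes "0 < t"
  shows "\<bar>LINT x:{t..ainv t}|lborel. indicator {c..d} x * Re (\<kappa> * (s x *\<^sub>R kernel_pair c h x))\<bar>
    \<le> cmod \<kappa> * \<eta>"
proof -
  let ?I = "{max t c..min (ainv t) d}"
  have int: "set_integrable lborel ?I (\<lambda>x. s x *\<^sub>R kernel_pair c h x)"
    by (rule signed_kernel_integrable) auto
  have "(LINT x:{t..ainv t}|lborel. indicator {c..d} x * Re (\<kappa> * (s x *\<^sub>R kernel_pair c h x)))
      = (LINT x:?I|lborel. Re (\<kappa> * (s x *\<^sub>R kernel_pair c h x)))"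
    by (simp only: set_integral_indicator_mult Int_atLeastAtMost)
  also have "\<dots> = Re (LINT x:?I|lborel. \<kappa> * (s x *\<^sub>R kernel_pair c h x))"
    using int by (intro set_integral_Re set_integrable_mult_right)
  also have "\<dots> = Re (\<kappa> * (LINT x:?I|lborel. s x *\<^sub>R kernel_pair c h x))"
    by (simp only: set_integral_mult_right)
  finally have eq: "(LINT x:{t..ainv t}|lborel. indicator {c..d} x * Re (\<kappa> * (s x *\<^sub>R kernel_pair c h x)))
      = Re (\<kappa> * (LINT x:?I|lborel. s x *\<^sub>R kernel_pair c h x))" .
  have "\<bar>Re (\<kappa> * (LINT x:?I|lborel. s x *\<^sub>R kernel_pair c h x))\<bar>
      \<le> cmod \<kappa> * cmod (LINT x:?I|lborel. s x *\<^sub>R kernel_pair c h x)"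
    using abs_Re_le_cmod[of "\<kappa> * (LINT x:?I|lborel. s x *\<^sub>R kernel_pair c h x)"]
    by (simp only: norm_mult)
  also have "\<dots> \<le> cmod \<kappa> * \<eta>"
    by (rule mult_left_mono[OF s_cancels]) auto
  finally show ?thesis
    unfolding eq .
qed

lemma GG_inner_le:
  assumes "0 < t"
  shows "\<bar>LINT x:{t..ainv t}|lborel. indicator {c..d} x * (s x * h x) / V x * (LINT y:{a x..t}|lborel. w y)\<bar>
    \<le> (\<bar>LINT y:{a c..t}|lborel. w y\<bar> + 1) * \<eta>"
proof -
  define W where "W y = (LINT z:{a c..y}|lborel. w z)" for y
  define \<kappa> where "\<kappa> = Complex (W t) 1"
  \<comment> \<open>on [c,d] we have a c \<le> a x \<le> t, so the kernel is W t - W (a x) = Re (\<kappa> * (1 + i W (a x)))\<close>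
  have eq: "(LINT x:{t..ainv t}|lborel. indicator {c..d} x * (s x * h x) / V x * (LINT y:{a x..t}|lborel. w y))
      = (LINT x:{t..ainv t}|lborel. indicator {c..d} x * Re (\<kappa> * (s x *\<^sub>R kernel_pair c h x)))"
  proof (intro set_lebesgue_integral_cong allI impI)
    fix x assume x: "x \<in> {t..ainv t}"
    show "indicator {c..d} x * (s x * h x) / V x * (LINT y:{a x..t}|lborel. w y)
        = indicator {c..d} x * Re (\<kappa> * (s x *\<^sub>R kernel_pair c h x))"
    proof (cases "x \<in> {c..d}")
      case True
      then have "0 < x" "c \<le> x" "x \<le> ainv t"
        using x c_pos by auto
      have "(LINT y:{a c..t}|lborel. w y) = W (a x) + (LINT y:{a x..t}|lborel. w y)"
        unfolding W_def using a_le[OF c_pos \<open>c \<le> x\<close>] a_le_of_le_ainv[OF \<open>0 < x\<close> \<open>0 < t\<close> \<open>x \<le> ainv t\<close>]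
        by (intro set_integral_Icc_split w_integrable a_pos c_pos)
      then have "(LINT y:{a x..t}|lborel. w y) = W t - W (a x)"
        by (simp add: W_def)
      moreover have "s x *\<^sub>R kernel_pair c h x = Complex (s x * h x / V x) (s x * h x / V x * W (a x))"
        by (simp add: kernel_pair_def W_def scaleR_complex.ctr)
      ultimately show ?thesis
        using True by (simp add: \<kappa>_def right_diff_distrib)
    qed simp
  qed simp
  have "cmod \<kappa> * \<eta> \<le> (\<bar>W t\<bar> + 1) * \<eta>"
    using cmod_le[of \<kappa>] cancel_bound_nonneg by (intro mult_right_mono) (simp_all add: \<kappa>_def)
  with signed_kernel_Re_le[OF \<open>0 < t\<close>, of \<kappa>] show ?thesis
    unfolding eq W_def by linarith
qed

lemma Gc_inner_le:
  assumes "0 < t"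
  shows "\<bar>LINT x:{t..ainv t}|lborel. indicator {c..d} x * (s x * h x) / V x\<bar> \<le> \<eta>"
  using signed_kernel_Re_le[OF assms, of 1] by (simp add: kernel_pair_def mult.assoc)


lemma GG_le:
  assumes "0 \<le> B" and B: "\<And>t. t \<in> {a c..d} \<Longrightarrow> \<bar>LINT y:{a c..t}|lborel. w y\<bar> \<le> B"
  shows "GG p v1 a b (\<lambda>x. indicator {c..d} x * (s x * h x))
    \<le> ennreal ((B + 1) * \<eta> * (LINT t:{a c..d}|lborel. w t) powr (1 / q))"
  unfolding GG_def
proof (rule ennpow_weighted_le[OF c_pos])
  show "0 \<le> (B + 1) * \<eta>"
    using \<open>0 \<le> B\<close> cancel_bound_nonneg by simp
  fix t assume t: "t \<in> {a c..d}"
  then have "0 < t"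
    using a_pos[OF c_pos] by auto
  have "(\<bar>LINT y:{a c..t}|lborel. w y\<bar> + 1) * \<eta> \<le> (B + 1) * \<eta>"
    using B[OF t] cancel_bound_nonneg by (simp add: mult_right_mono)
  with GG_inner_le[OF \<open>0 < t\<close>]
  show "\<bar>LINT x:{t..ainv t}|lborel. indicator {c..d} x * (s x * h x) / V x * (LINT y:{a x..t}|lborel. w y)\<bar>
      \<le> (B + 1) * \<eta>"
    by linarith
next
  fix t assume "0 < t" "t \<notin> {a c..d}"
  with c_pos show "(LINT x:{t..ainv t}|lborel. indicator {c..d} x * (s x * h x) / V x * (LINT y:{a x..t}|lborel. w y)) = 0"
    by (rule set_integral_ainv_outside) simp
qed

lemma Gc_le:
  assumes "0 \<le> B" and B: "\<And>t. t \<in> {a c..d} \<Longrightarrow> V t \<le> B"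
  shows "Gc p v1 a b (\<lambda>x. indicator {c..d} x * (s x * h x))
    \<le> ennreal (B * \<eta> * (LINT t:{a c..d}|lborel. w t) powr (1 / q))"
  unfolding Gc_eq_weighted
proof (rule ennpow_weighted_le[OF c_pos])
  show "0 \<le> B * \<eta>"
    using \<open>0 \<le> B\<close> cancel_bound_nonneg by simp
  fix t assume t: "t \<in> {a c..d}"
  then have "0 < t"
    using a_pos[OF c_pos] by auto
  then have "\<bar>V t\<bar> \<le> B"
    using B[OF t] V_pos[OF \<open>0 < t\<close>] by simp
  then show "\<bar>V t * (LINT x:{t..ainv t}|lborel. indicator {c..d} x * (s x * h x) / V x)\<bar> \<le> B * \<eta>"
    unfolding abs_mult using Gc_inner_le[OF \<open>0 < t\<close>] \<open>0 \<le> B\<close>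
    by (rule mult_mono) simp
next
  fix t assume "0 < t" "t \<notin> {a c..d}"
  with c_pos have "(LINT x:{t..ainv t}|lborel. indicator {c..d} x * (s x * h x) / V x) = 0"
    by (rule set_integral_ainv_outside) simp
  then show "V t * (LINT x:{t..ainv t}|lborel. indicator {c..d} x * (s x * h x) / V x) = 0"
    by simp
qed

end



lemma exists_sign_change_Wnorm_le:
  obtains C where "0 \<le> C"
    and "\<And>\<eta>. 0 < \<eta> \<Longrightarrow> \<exists>g\<in>Wspace p v1 a. (\<forall>x\<in>{c..d}. \<bar>g x\<bar> = \<bar>h x\<bar>) \<and> Wnorm p v1 a b g \<le> ennreal (C * \<eta>)"
proof -
  define Iq where "Iq = (LINT t:{a c..d}|lborel. w t) powr (1 / q)"
  have "continuous_on {a c..d} (\<lambda>t. LINT y:{a c..t}|lborel. w y)"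
    using a_pos[OF c_pos] by (intro continuous_on_subset[OF continuous_on_LBINT] w_integrable) auto
  then obtain BW where "0 \<le> BW" and BW: "\<And>t. t \<in> {a c..d} \<Longrightarrow> \<bar>LINT y:{a c..t}|lborel. w y\<bar> \<le> BW"
    by (rule continuous_on_Icc_abs_le) blast
  obtain BV where "0 \<le> BV" and BV: "\<And>t. t \<in> {a c..d} \<Longrightarrow> \<bar>V t\<bar> \<le> BV"
    using V_continuous_on[OF a_pos[OF c_pos]] by (rule continuous_on_Icc_abs_le) blast
  show thesis
  proof (rule that[of "(BW + 1 + BV) * Iq"])
    show "0 \<le> (BW + 1 + BV) * Iq"
      using \<open>0 \<le> BW\<close> \<open>0 \<le> BV\<close> by (simp add: Iq_def)
    fix \<eta> :: real assume "0 < \<eta>"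
    obtain s where s: "s \<in> borel_measurable borel" "\<And>x. \<bar>s x\<bar> = 1"
      and cancels: "\<And>l r. c \<le> l \<Longrightarrow> r \<le> d \<Longrightarrow> norm (LINT x:{l..r}|lborel. s x *\<^sub>R kernel_pair c h x) \<le> \<eta>"
      using exists_sign_small_integrals[OF kernel_pair_integrable c_le_d \<open>0 < \<eta>\<close>] by blast
    let ?g = "\<lambda>x. indicator {c..d} x * (s x * h x)"
    have "Wnorm p v1 a b ?g \<le> ennreal ((BW + 1) * \<eta> * Iq) + ennreal (BV * \<eta> * Iq)"
      unfolding Wnorm_def Iq_def
      using GG_le[OF s cancels \<open>0 \<le> BW\<close> BW] Gc_le[OF s cancels \<open>0 \<le> BV\<close>] BV abs_le_D1
      by (intro add_mono) blast+
    also have "\<dots> = ennreal ((BW + 1 + BV) * Iq * \<eta>)"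
      using \<open>0 \<le> BW\<close> \<open>0 \<le> BV\<close> \<open>0 < \<eta>\<close> by (simp add: Iq_def ennreal_plus[symmetric] algebra_simps del: ennreal_plus)
    finally have "Wnorm p v1 a b ?g \<le> ennreal ((BW + 1 + BV) * Iq * \<eta>)" .
    moreover have "\<forall>x\<in>{c..d}. \<bar>?g x\<bar> = \<bar>h x\<bar>"
      by (simp add: abs_mult s(2))
    ultimately show "\<exists>g\<in>Wspace p v1 a. (\<forall>x\<in>{c..d}. \<bar>g x\<bar> = \<bar>h x\<bar>) \<and> Wnorm p v1 a b g \<le> ennreal ((BW + 1 + BV) * Iq * \<eta>)"
      using sign_change_in_Wspace[OF s] by (intro bexI[of _ ?g] conjI)
  qed
qed

end

end

theorem lemma2p8:
  fixes p :: real and v0 v1 a b h :: "real \<Rightarrow> real" and c d :: real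
  assumes p: "1 < p"
    and v0: "Vclass p v0" and v1: "Vclass p v1" and v1inv: "inv_Lloc (conj_exp p) v1"
    and c0: "\<exists>c0>0.
        Lnorm (conj_exp p) (\<lambda>x. 1 / v1 x) {0<..<c0} * Lnorm p v0 {0<..<c0} = \<infinity> \<and>
        Lnorm (conj_exp p) (\<lambda>x. 1 / v1 x) {c0<..} * Lnorm p v0 {c0<..} = \<infinity>"
    and a_mono: "strict_mono_on {0<..} a" and b_mono: "strict_mono_on {0<..} b"
    and a_ac: "loc_abs_cont a" and b_ac: "loc_abs_cont b"
    and a_0: "(a \<longlongrightarrow> 0) (at_right 0)" and b_0: "(b \<longlongrightarrow> 0) (at_right 0)"
    and a_inf: "filterlim a at_top at_top" and b_inf: "filterlim b at_top at_top"
    and ab: "\<And>t. t > 0 \<Longrightarrow> a t < t \<and> t < b t"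
    and ab_eq: "\<And>t. t > 0 \<Longrightarrow>
        (LINT x:{a t..t}|lborel. wgt p v1 x) = (LINT x:{t..b t}|lborel. wgt p v1 x)"
    and ab_one: "\<And>t. t > 0 \<Longrightarrow>
        (LINT x:{a t..b t}|lborel. wgt p v1 x) powr (1 / conj_exp p) *
        (LINT x:{a t..b t}|lborel. \<bar>v0 x\<bar> powr p) powr (1 / p) = 1"
    and cd: "0 < c" "c \<le> d"
    and h: "set_integrable lborel {c..d} h"
  shows "\<forall>\<epsilon>>0. \<exists>g \<in> Wspace p v1 a.
           (\<forall>x\<in>{c..d}. \<bar>g x\<bar> = \<bar>h x\<bar>) \<and> Wnorm p v1 a b g < ennreal \<epsilon>"
proof -
  have "0 < V1fun p v1 a b t" if "0 < t" for t
    using ab_one[OF that] unfolding V1fun_def[symmetric] by (rule V1fun_pos)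
  moreover have "a t \<le> b t" if "0 < t" for t
    using ab[OF that] by linarith
  \<comment> \<open>v0 enters only through the positivity of V1\<close>
  ultimately interpret ab_weights p v1 a b
    using p v1inv a_mono a_ac b_ac a_0 a_inf by unfold_locales
  obtain C where "0 \<le> C"
    and C: "\<And>\<eta>. 0 < \<eta> \<Longrightarrow> \<exists>g\<in>Wspace p v1 a. (\<forall>x\<in>{c..d}. \<bar>g x\<bar> = \<bar>h x\<bar>) \<and> Wnorm p v1 a b g \<le> ennreal (C * \<eta>)"
    using exists_sign_change_Wnorm_le[OF cd h] by blast
  show ?thesis
  proof (intro allI impI)
    fix \<epsilon> :: real assume "0 < \<epsilon>"
    then have "ennreal (C * (\<epsilon> / (C + 1))) < ennreal \<epsilon>"
      using \<open>0 \<le> C\<close> by (subst ennreal_less_iff) (simp_all add: field_simps)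
    moreover have "0 < \<epsilon> / (C + 1)"
      using \<open>0 \<le> C\<close> \<open>0 < \<epsilon>\<close> by simp
    ultimately show "\<exists>g \<in> Wspace p v1 a. (\<forall>x\<in>{c..d}. \<bar>g x\<bar> = \<bar>h x\<bar>) \<and> Wnorm p v1 a b g < ennreal \<epsilon>"
      using C le_less_trans by blast
  qed
qed

end
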